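(* Let $d\geqslant 5$ be an integer and let $r$ be an integer with $\gcd(d,r)=1$. Let $a\geqslant 1$ be an integer and $n=ad-r$, and assume $n\geqslant r$. Suppose that $2r+kd\equiv 0\pmod{n}$ for some integer $k>0$. Then $k\geqslant a(d-4)/2$. *)

theory Defs
  imports "HOL-Number_Theory.Number_Theory"
begin

end

theory Submission
  imports Defs
begin

(* Modulo n = a d - r we have r = a d, so the hypothesis reads d (k + 2a) = 0 (mod n); since
   gcd(d, n) = gcd(d, r) = 1 this forces n to divide k + 2a > 0, whence k + 2a \<ge> n.
   Finally n \<ge> r gives 2n \<ge> n + r = a d, i.e. 2k \<ge> a d - 4a. *)

lemma coprime_diff_mult_left:
  fixes d r a :: int
  assumes "coprime d r"
  shows "coprime d (a * d - r)"
proof (rule coprime_imp_coprime[OF assms])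
  fix e
  assume "e dvd d" and "e dvd a * d - r"
  moreover have "r = a * d - (a * d - r)"
    by simp
  ultimately show "e dvd r"
    by (metis dvd_diff dvd_mult)
qed simp

lemma dvd_add_mult_of_cong_zero:
  fixes d r a c k :: int
  assumes "coprime d r"
    and "[c * r + k * d = 0] (mod a * d - r)"
  shows "(a * d - r) dvd (k + c * a)"
proof -
  let ?n = "a * d - r"
  have "d * (k + c * a) = (c * r + k * d) + c * ?n"
    by (simp add: algebra_simps)
  then have "?n dvd d * (k + c * a)"
    using assms(2) by (simp add: cong_0_iff)
  moreover have "coprime ?n d"
    using coprime_diff_mult_left[OF assms(1)] by (simp add: coprime_commute)
  ultimately show ?thesis
    by (simp add: coprime_dvd_mult_right_iff)
qed

theorem lemma1:
  fixes d r a n k :: int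
  assumes "d \<ge> 5"
    and "gcd d r = 1"
    and "a \<ge> 1"
    and "n = a * d - r"
    and "n \<ge> r"
    and "k > 0"
    and "[2 * r + k * d = 0] (mod n)"
  shows "real_of_int k \<ge> real_of_int (a * (d - 4)) / 2"
proof -
  have "n dvd k + 2 * a"
    using dvd_add_mult_of_cong_zero[of d r 2 k a] assms(2,4,7)
    by (simp add: coprime_iff_gcd_eq_1)
  moreover have "k + 2 * a > 0"
    using assms(3,6) by simp
  ultimately have "n \<le> k + 2 * a"
    by (simp add: zdvd_imp_le)
  moreover have "2 * n \<ge> a * d"
    using assms(4,5) by simp
  ultimately have "2 * k \<ge> a * (d - 4)"
    by (simp add: algebra_simps)
  then show ?thesis
    by (simp add: field_simps flip: of_int_mult of_int_diff of_int_le_iff)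
qed

end
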